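(* Assume that for every time index $k \ge 0$ there exists $B_k < \infty$ such that $w_k(x_{0:k}) \le B_k$ for all $x_{0:k} \in \mathcal{S}_k$. Then for any $k>0$, the Markov kernel $$K_k^{draw}(x_{0:k}, dx_{0:k}') = \alpha_k(x_{0:k},x_{0:k}')\,(\widehat{\pi}_{k-1}^{(N_p)}\times q_k)(dx_{0:k}') + \Big(1 - \int_{E_k}\alpha_k(x_{0:k},y_{0:k})\,(\widehat{\pi}_{k-1}^{(N_p)}\times q_k)(dy_{0:k})\Big)\delta_{x_{0:k}}(dx_{0:k}'),$$ with $\alpha_k(x_{0:k},x_{0:k}') = \min\big(1, w_k(x_{0:k}')/w_k(x_{0:k})\big)$, is uniformly ergodic with invariant distribution $$\breve{\pi}_k^{(N_p)}(dx_{0:k}) = \frac{\pi_{k/k-1}(x_{0:k-1})\,(\widehat{\pi}_{k-1}^{(N_p)}\times\overline{\pi}_k)(dx_{0:k})}{\widehat{\pi}_{k-1}^{(N_p)}(\pi_{k/k-1})}.$$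
   Context: Let $(E,\mathcal{F})$ be a measurable space and $E_k = E^{k+1}$ with product $\sigma$-algebra; densities are with respect to a fixed reference measure. A hidden Markov model has initial density $p(x_0)$, transition densities $p(x_l\mid x_{l-1})$ and likelihoods $p(z_l\mid x_l)$ for fixed observations $z_1,z_2,\dots$. Let $\gamma_k(x_{0:k}) = p(x_0)\prod_{l=1}^k p(x_l\mid x_{l-1})p(z_l\mid x_l)$, $Z_k = \int\gamma_k\in(0,\infty)$, $\pi_k = \gamma_k/Z_k$, $\mathcal{S}_k = \{x_{0:k}:\pi_k(x_{0:k})>0\}$. For a measure $\mu$ and function $f$, $\mu(f)=\int f\,d\mu$. Proposals: $q_0$ a probability density on $E$; for $k>0$, $q_k(x_{0:k-1},x_k)$ a probability density in $x_k$ given $x_{0:k-1}$; for a probability measure $\mu$ on $E_{k-1}$, $(\mu\times q_k)(dx_{0:k}) = \mu(dx_{0:k-1})q_k(x_{0:k-1},dx_k)$. Weights: $w_0=\gamma_0/q_0$, $w_k(x_{0:k}) = \gamma_k(x_{0:k})/(\gamma_{k-1}(x_{0:k-1})q_k(x_{0:k-1},x_k))$. Further, with $\pi_k(x_{0:k-1}) = \int_E \pi_k(x_{0:k})\,dx_k$, define $\overline{\pi}_k(x_{0:k-1},x_k) = \pi_k(x_{0:k})/\pi_k(x_{0:k-1}) = p(x_k\mid x_{k-1},z_k)$ and $\pi_{k/k-1}(x_{0:k-1}) = \pi_k(x_{0:k-1})/\pi_{k-1}(x_{0:k-1})$ (proportional to $p(z_k\mid x_{k-1})$). Here $\widehat{\pi}_{k-1}^{(N_p)}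 = \frac{1}{N_p}\sum_{i=1}^{N_p}\delta_{x_{0:k-1}^i}$ is the empirical measure of the $N_p$ samples produced at time $k-1$ by the sequential MCMC algorithm: at time $0$ a Markov chain with kernel $K_0^{draw}$ (propose from $q_0$, accept with probability $\min(1,w_0(x')/w_0(x))$) started in $\mathcal{S}_0$; at each time $l>0$ a Markov chain started in $\mathcal{S}_l$ whose iterations apply $K_l^{draw}$ (defined as in the claim with $l$ in place of $k$) followed by a refinement Markov kernel leaving $\breve{\pi}_l^{(N_p)}$ invariant. *)

theory Defs
  imports "HOL-Probability.Probability"
begin

text \<open>Paths x_{0:k} are elements of E_k = E^{k+1}, represented as extensional
  functions on the index set {..k}, i.e. points of the product measurable space below.\<close>

definition Ek :: "'a measure \<Rightarrow> nat \<Rightarrow> (nat \<Rightarrow> 'a) measure" where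
  "Ek M k = PiM {..k} (\<lambda>_. M)"

text \<open>gamma_k(x_{0:k}) = p(x_0) prod_{l=1}^k p(x_l | x_{l-1}) p(z_l | x_l);
  here tr u v = p(x_l = v | x_{l-1} = u), lik l v = p(z_l | x_l = v).\<close>
definition hmm_gamma :: "('a \<Rightarrow> real) \<Rightarrow> ('a \<Rightarrow> 'a \<Rightarrow> real) \<Rightarrow> (nat \<Rightarrow> 'a \<Rightarrow> real)
    \<Rightarrow> nat \<Rightarrow> (nat \<Rightarrow> 'a) \<Rightarrow> real" where
  "hmm_gamma p0 tr lik k x = p0 (x 0) * (\<Prod>l\<in>{1..k}. tr (x (l - 1)) (x l) * lik l (x l))"

definition hmm_Z :: "'a measure \<Rightarrow> ('a \<Rightarrow> real) \<Rightarrow> ('a \<Rightarrow> 'a \<Rightarrow> real) \<Rightarrow> (nat \<Rightarrow> 'a \<Rightarrow> real)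
    \<Rightarrow> nat \<Rightarrow> real" where
  "hmm_Z M p0 tr lik k = (\<integral>x. hmm_gamma p0 tr lik k x \<partial>Ek M k)"

definition hmm_post :: "'a measure \<Rightarrow> ('a \<Rightarrow> real) \<Rightarrow> ('a \<Rightarrow> 'a \<Rightarrow> real) \<Rightarrow> (nat \<Rightarrow> 'a \<Rightarrow> real)
    \<Rightarrow> nat \<Rightarrow> (nat \<Rightarrow> 'a) \<Rightarrow> real" where
  "hmm_post M p0 tr lik k x = hmm_gamma p0 tr lik k x / hmm_Z M p0 tr lik k"

definition hmm_supp :: "'a measure \<Rightarrow> ('a \<Rightarrow> real) \<Rightarrow> ('a \<Rightarrow> 'a \<Rightarrow> real) \<Rightarrow> (nat \<Rightarrow> 'a \<Rightarrow> real)
    \<Rightarrow> nat \<Rightarrow> (nat \<Rightarrow> 'a) set" where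
  "hmm_supp M p0 tr lik k = {x \<in> space (Ek M k). hmm_post M p0 tr lik k x > 0}"

definition hmm_marg :: "'a measure \<Rightarrow> ('a \<Rightarrow> real) \<Rightarrow> ('a \<Rightarrow> 'a \<Rightarrow> real) \<Rightarrow> (nat \<Rightarrow> 'a \<Rightarrow> real)
    \<Rightarrow> nat \<Rightarrow> (nat \<Rightarrow> 'a) \<Rightarrow> real" where
  "hmm_marg M p0 tr lik k y = (\<integral>a. hmm_post M p0 tr lik k (y(k := a)) \<partial>M)"

definition hmm_cond :: "'a measure \<Rightarrow> ('a \<Rightarrow> real) \<Rightarrow> ('a \<Rightarrow> 'a \<Rightarrow> real) \<Rightarrow> (nat \<Rightarrow> 'a \<Rightarrow> real)
    \<Rightarrow> nat \<Rightarrow> (nat \<Rightarrow> 'a) \<Rightarrow> 'a \<Rightarrow> real" where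
  "hmm_cond M p0 tr lik k y a = hmm_post M p0 tr lik k (y(k := a)) / hmm_marg M p0 tr lik k y"

definition hmm_pred :: "'a measure \<Rightarrow> ('a \<Rightarrow> real) \<Rightarrow> ('a \<Rightarrow> 'a \<Rightarrow> real) \<Rightarrow> (nat \<Rightarrow> 'a \<Rightarrow> real)
    \<Rightarrow> nat \<Rightarrow> (nat \<Rightarrow> 'a) \<Rightarrow> real" where
  "hmm_pred M p0 tr lik k y = hmm_marg M p0 tr lik k y / hmm_post M p0 tr lik (k - 1) y"

text \<open>Importance weights w_k, valued in ennreal so that c/0 = infinity for c > 0
  (the mathematical convention; a real-valued division would give 0).
  q0 is the initial proposal density; q k y a = q_k(x_{0:k-1} = y, x_k = a).\<close>
definition smc_weight :: "('a \<Rightarrow> real) \<Rightarrow> ('a \<Rightarrow> 'a \<Rightarrow> real) \<Rightarrow> (nat \<Rightarrow> 'a \<Rightarrow> real)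
    \<Rightarrow> ('a \<Rightarrow> real) \<Rightarrow> (nat \<Rightarrow> (nat \<Rightarrow> 'a) \<Rightarrow> 'a \<Rightarrow> real) \<Rightarrow> nat \<Rightarrow> (nat \<Rightarrow> 'a) \<Rightarrow> ennreal" where
  "smc_weight p0 tr lik q0 q k x =
     (if k = 0 then ennreal (hmm_gamma p0 tr lik 0 x) / ennreal (q0 (x 0))
      else ennreal (hmm_gamma p0 tr lik k x) /
           ennreal (hmm_gamma p0 tr lik (k - 1) (restrict x {..<k}) * q k (restrict x {..<k}) (x k)))"

definition emp_measure :: "'b measure \<Rightarrow> nat \<Rightarrow> (nat \<Rightarrow> 'b) \<Rightarrow> 'b measure" where
  "emp_measure S N xs = measure_of (space S) (sets S)
     (\<lambda>A. (\<Sum>i<N. indicator A (xs i)) / of_nat N)"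

definition ext_prod :: "'a measure \<Rightarrow> nat \<Rightarrow> (nat \<Rightarrow> 'a) measure
    \<Rightarrow> ((nat \<Rightarrow> 'a) \<Rightarrow> 'a \<Rightarrow> real) \<Rightarrow> (nat \<Rightarrow> 'a) measure" where
  "ext_prod M k \<mu> p = measure_of (space (Ek M k)) (sets (Ek M k))
     (\<lambda>A. \<integral>\<^sup>+y. \<integral>\<^sup>+a. ennreal (p y a) * indicator A (y(k := a)) \<partial>M \<partial>\<mu>)"

definition mh_accept :: "('b \<Rightarrow> ennreal) \<Rightarrow> 'b \<Rightarrow> 'b \<Rightarrow> ennreal" where
  "mh_accept w x y = min 1 (w y / w x)"

definition imh_kernel :: "'b measure \<Rightarrow> 'b measure \<Rightarrow> ('b \<Rightarrow> ennreal) \<Rightarrow> 'b \<Rightarrow> 'b measure" where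
  "imh_kernel S \<nu> w x = measure_of (space S) (sets S)
     (\<lambda>A. (\<integral>\<^sup>+y. mh_accept w x y * indicator A y \<partial>\<nu>)
          + (1 - (\<integral>\<^sup>+y. mh_accept w x y \<partial>\<nu>)) * indicator A x)"

fun kpow :: "'b measure \<Rightarrow> ('b \<Rightarrow> 'b measure) \<Rightarrow> nat \<Rightarrow> 'b \<Rightarrow> 'b measure" where
  "kpow S K 0 x = return S x"
| "kpow S K (Suc n) x = bind (kpow S K n x) K"

definition tv_dist :: "'b measure \<Rightarrow> 'b measure \<Rightarrow> real" where
  "tv_dist P Q = (SUP A\<in>sets P. \<bar>measure P A - measure Q A\<bar>)"

definition uniformly_ergodic :: "'b measure \<Rightarrow> 'b set \<Rightarrow> ('b \<Rightarrow> 'b measure) \<Rightarrow> 'b measure \<Rightarrow> bool" where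
  "uniformly_ergodic S X K \<pi> \<longleftrightarrow> (\<lambda>n. SUP x\<in>X. tv_dist (kpow S K n x) \<pi>) \<longlonglongrightarrow> 0"

end

theory Submission
  imports Defs
begin

(* The target has density c * w_k with respect to the proposal nu = emp x q_k: along every sample
   path, hmm_cond * hmm_pred and q_k * w_k both equal p(x_k | x_(k-1)) p(z_k | x_k) up to factors not
   depending on x_k. So the draw kernel is an independent Metropolis-Hastings kernel with proposal nu
   and target c * w_k * nu. Detailed balance, w x * alpha x y = min (w x) (w y), makes the target
   stationary, and the bound w_k <= B gives alpha x y >= w_k y / B, i.e. the Doeblin minorization
   K(x, .) >= eps * target with eps = 1 / (c * B). Iterating, K^n(x, .) >= (1 - (1 - eps)^n) * target,
   so the total variation distance to the target is at most (1 - eps)^n, uniformly in x. *)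

section \<open>Doeblin minorization and uniform ergodicity\<close>

lemma kpow_in_prob_algebra:
  assumes kernel: "K \<in> S \<rightarrow>\<^sub>M prob_algebra S" and x: "x \<in> space S"
  shows "kpow S K n x \<in> space (prob_algebra S)"
proof (induction n)
  case 0
  show ?case using x by (simp add: space_prob_algebra prob_space_return)
next
  case (Suc n)
  then show ?case
    using prob_space_bind'[OF Suc kernel] sets_bind'[OF Suc kernel] by (simp add: space_prob_algebra)
qed

lemma nn_integral_mono_scaled_measure:
  assumes sets: "sets \<pi> = sets \<mu>" and le: "\<And>A. A \<in> sets \<mu> \<Longrightarrow> a * emeasure \<pi> A \<le> emeasure \<mu> A"
    and f: "f \<in> borel_measurable \<mu>"
  shows "a * (\<integral>\<^sup>+x. f x \<partial>\<pi>) \<le> (\<integral>\<^sup>+x. f x \<partial>\<mu>)"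
proof -
  have "emeasure (scale_measure a \<pi>) A \<le> emeasure \<mu> A" for A
    using le[of A] sets by (cases "A \<in> sets \<mu>") (auto simp: emeasure_notin_sets)
  then have "scale_measure a \<pi> \<le> \<mu>"
    using sets sets_eq_imp_space_eq[OF sets] by (simp add: le_measure_iff le_fun_def space_scale_measure)
  moreover have "f \<in> borel_measurable \<pi>" using f sets by (simp cong: measurable_cong_sets)
  ultimately show ?thesis
    using nn_integral_mono_measure[of "scale_measure a \<pi>" \<mu> f] sets
    by (simp add: nn_integral_scale_measure)
qed

lemma tv_dist_nonneg:
  assumes "prob_space P" and "prob_space Q"
  shows "0 \<le> tv_dist P Q"
proof -
  have "\<bar>measure P A - measure Q A\<bar> \<le> 1" for A
    using prob_space.prob_le_1[OF assms(1), of A] prob_space.prob_le_1[OF assms(2), of A]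
      measure_nonneg[of P A] measure_nonneg[of Q A] by linarith
  then have "bdd_above ((\<lambda>A. \<bar>measure P A - measure Q A\<bar>) ` sets P)"
    by (intro bdd_aboveI2[where M = 1])
  then show ?thesis
    unfolding tv_dist_def by (rule cSUP_upper2[OF _ sets.empty_sets]) simp
qed

lemma tv_dist_le_of_minorized:
  assumes P: "prob_space P" and Q: "prob_space Q" and sets: "sets P = sets Q"
    and a: "0 \<le> a" "a \<le> 1"
    and low: "\<And>A. A \<in> sets Q \<Longrightarrow> ennreal a * emeasure Q A \<le> emeasure P A"
  shows "tv_dist P Q \<le> 1 - a"
  unfolding tv_dist_def
proof (rule cSUP_least)
  show "sets P \<noteq> {}" using sets.empty_sets by blast
next
  fix A assume "A \<in> sets P"
  then have A: "A \<in> sets Q" and A': "space Q - A \<in> sets Q" using sets by auto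
  have low_real: "a * measure Q B \<le> measure P B" if "B \<in> sets Q" for B
    using low[OF that] a P Q
    by (simp add: prob_space_def finite_measure.emeasure_eq_measure ennreal_mult''[symmetric])
  have "measure P (space Q - A) = 1 - measure P A" "measure Q (space Q - A) = 1 - measure Q A"
    using prob_space.prob_compl[OF P, of A] prob_space.prob_compl[OF Q, of A] A sets
      sets_eq_imp_space_eq[OF sets] by auto
  then have "a * (1 - measure Q A) \<le> 1 - measure P A" using low_real[OF A'] by simp
  moreover have "a * measure Q A \<le> measure P A" by (rule low_real[OF A])
  moreover have "0 \<le> (1 - a) * measure Q A" "(1 - a) * measure Q A \<le> 1 - a"
    using a prob_space.prob_le_1[OF Q, of A] by (auto intro: mult_left_le)
  ultimately show "\<bar>measure P A - measure Q A\<bar> \<le> 1 - a"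
    by (simp add: abs_le_iff algebra_simps)
qed

locale doeblin_kernel =
  fixes S :: "'b measure" and K :: "'b \<Rightarrow> 'b measure" and \<pi> :: "'b measure" and e :: real
  assumes kernel: "K \<in> S \<rightarrow>\<^sub>M prob_algebra S"
    and stationary_prob: "\<pi> \<in> space (prob_algebra S)"
    and stationary: "bind \<pi> K = \<pi>"
    and const_pos: "0 < e"
    and minorization: "\<And>x A. x \<in> space S \<Longrightarrow> A \<in> sets S \<Longrightarrow> ennreal e * emeasure \<pi> A \<le> emeasure (K x) A"
begin

lemma prob_space_stationary: "prob_space \<pi>" and sets_stationary: "sets \<pi> = sets S"
  using stationary_prob by (auto simp: space_prob_algebra)

lemma const_le_1: "e \<le> 1"
proof -
  obtain x where x: "x \<in> space S"
    using prob_space.not_empty[OF prob_space_stationary] sets_eq_imp_space_eq[OF sets_stationary] by auto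
  have "prob_space (K x)" "sets (K x) = sets S"
    using measurable_space[OF kernel x] by (auto simp: space_prob_algebra)
  then have "emeasure (K x) (space S) = 1"
    using prob_space.emeasure_space_1 sets_eq_imp_space_eq by metis
  moreover have "emeasure \<pi> (space S) = 1"
    using prob_space.emeasure_space_1[OF prob_space_stationary] sets_eq_imp_space_eq[OF sets_stationary] by simp
  ultimately show ?thesis using minorization[OF x sets.top] by simp
qed

lemma measurable_emeasure_kernel_on:
  assumes "sets P = sets S" and "A \<in> sets S"
  shows "(\<lambda>z. emeasure (K z) A) \<in> borel_measurable P"
  using measurable_emeasure_kernel[OF measurable_prob_algebraD[OF kernel] assms(2)] assms(1)
  by (simp cong: measurable_cong_sets)

lemma nn_integral_kernel_split:
  assumes P: "P \<in> space (prob_algebra S)" and A: "A \<in> sets S"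
  shows "(\<integral>\<^sup>+z. emeasure (K z) A \<partial>P)
           = ennreal e * emeasure \<pi> A + (\<integral>\<^sup>+z. emeasure (K z) A - ennreal e * emeasure \<pi> A \<partial>P)"
proof -
  have sets_P: "sets P = sets S" and "prob_space P" using P by (auto simp: space_prob_algebra)
  note measurable_emeasure_kernel_on[OF sets_P A, measurable]
  have "(\<integral>\<^sup>+z. emeasure (K z) A \<partial>P)
          = (\<integral>\<^sup>+z. ennreal e * emeasure \<pi> A + (emeasure (K z) A - ennreal e * emeasure \<pi> A) \<partial>P)"
    using minorization[OF _ A] sets_eq_imp_space_eq[OF sets_P]
    by (intro nn_integral_cong) (simp add: add_diff_inverse_ennreal)
  also have "\<dots> = ennreal e * emeasure \<pi> A + (\<integral>\<^sup>+z. emeasure (K z) A - ennreal e * emeasure \<pi> A \<partial>P)"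
    using \<open>prob_space P\<close> by (simp add: nn_integral_add prob_space.emeasure_space_1)
  finally show ?thesis .
qed

(* Split K z = e * pi + R z: stationarity gives pi R = (1 - e) * pi, and a * pi <= mu gives
   mu R >= a * (1 - e) * pi. *)
lemma bind_minorized:
  assumes \<mu>: "\<mu> \<in> space (prob_algebra S)" and a: "0 \<le> a"
    and low: "\<And>A. A \<in> sets S \<Longrightarrow> ennreal a * emeasure \<pi> A \<le> emeasure \<mu> A"
    and A: "A \<in> sets S"
  shows "ennreal (e + (1 - e) * a) * emeasure \<pi> A \<le> emeasure (bind \<mu> K) A"
proof -
  define m where "m = measure \<pi> A"
  define h where "h z = emeasure (K z) A - ennreal e * emeasure \<pi> A" for z
  have sets_\<mu>: "sets \<mu> = sets S" using \<mu> by (simp add: space_prob_algebra)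
  have \<pi>A: "emeasure \<pi> A = ennreal m"
    unfolding m_def using prob_space_stationary by (simp add: prob_space_def finite_measure.emeasure_eq_measure)
  have h_meas: "h \<in> borel_measurable \<mu>"
    using measurable_emeasure_kernel_on[OF sets_\<mu> A] unfolding h_def[abs_def] by measurable
  have split_\<pi>: "ennreal m = ennreal (e * m) + (\<integral>\<^sup>+z. h z \<partial>\<pi>)"
    using nn_integral_kernel_split[OF stationary_prob A]
    unfolding emeasure_bind_prob_algebra[OF stationary_prob kernel A, symmetric] stationary \<pi>A h_def
    using const_pos by (simp add: ennreal_mult')
  have h_\<pi>: "(\<integral>\<^sup>+z. h z \<partial>\<pi>) = ennreal ((1 - e) * m)"
  proof -
    have "(\<integral>\<^sup>+z. h z \<partial>\<pi>) = ennreal m - ennreal (e * m)"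
      unfolding split_\<pi> by (simp add: ennreal_add_diff_cancel_left)
    also have "\<dots> = ennreal ((1 - e) * m)"
      using const_pos by (simp add: ennreal_minus m_def algebra_simps)
    finally show ?thesis .
  qed
  have "ennreal (e + (1 - e) * a) * emeasure \<pi> A = ennreal (e * m) + ennreal a * ennreal ((1 - e) * m)"
  proof -
    have "0 \<le> m" "0 \<le> 1 - e" using const_le_1 by (auto simp: m_def)
    then have "ennreal (e + (1 - e) * a) * ennreal m = ennreal ((e + (1 - e) * a) * m)"
      by (simp add: ennreal_mult'')
    also have "\<dots> = ennreal (e * m + a * ((1 - e) * m))"
      by (rule arg_cong[where f = ennreal]) (simp add: algebra_simps)
    also have "\<dots> = ennreal (e * m) + ennreal a * ennreal ((1 - e) * m)"
      using const_pos a \<open>0 \<le> m\<close> \<open>0 \<le> 1 - e\<close> by (simp add: ennreal_plus ennreal_mult)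
    finally show ?thesis unfolding \<pi>A .
  qed
  also have "\<dots> \<le> ennreal (e * m) + (\<integral>\<^sup>+z. h z \<partial>\<mu>)"
    unfolding h_\<pi>[symmetric]
    by (intro add_left_mono nn_integral_mono_scaled_measure) (use low h_meas sets_stationary sets_\<mu> in auto)
  also have "\<dots> = emeasure (bind \<mu> K) A"
    using nn_integral_kernel_split[OF \<mu> A] const_pos
    unfolding emeasure_bind_prob_algebra[OF \<mu> kernel A] \<pi>A h_def by (simp add: ennreal_mult')
  finally show ?thesis .
qed

lemma kpow_minorized:
  assumes x: "x \<in> space S" and A: "A \<in> sets S"
  shows "ennreal (1 - (1 - e) ^ n) * emeasure \<pi> A \<le> emeasure (kpow S K n x) A"
  using A
proof (induction n arbitrary: A)
  case 0
  then show ?case by simp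
next
  case (Suc n)
  have "0 \<le> 1 - (1 - e) ^ n" using const_pos const_le_1 by (simp add: power_le_one)
  from bind_minorized[OF kpow_in_prob_algebra[OF kernel x] this Suc.IH Suc.prems]
  show ?case by (simp add: algebra_simps)
qed

lemma uniformly_ergodic:
  assumes X: "X \<subseteq> space S" "X \<noteq> {}"
  shows "uniformly_ergodic S X K \<pi>"
proof -
  have tv: "0 \<le> tv_dist (kpow S K n x) \<pi> \<and> tv_dist (kpow S K n x) \<pi> \<le> (1 - e) ^ n"
    if "x \<in> X" for n x
  proof -
    have x: "x \<in> space S" using that X by auto
    have P: "prob_space (kpow S K n x)" and sets_P: "sets (kpow S K n x) = sets \<pi>"
      using kpow_in_prob_algebra[OF kernel x] sets_stationary by (auto simp: space_prob_algebra)
    have "0 \<le> 1 - (1 - e) ^ n" "1 - (1 - e) ^ n \<le> 1"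
      using const_pos const_le_1 by (auto simp: power_le_one)
    from tv_dist_le_of_minorized[OF P prob_space_stationary sets_P this kpow_minorized[OF x]]
    have "tv_dist (kpow S K n x) \<pi> \<le> (1 - e) ^ n" by (simp add: sets_stationary)
    with tv_dist_nonneg[OF P prob_space_stationary] show ?thesis by simp
  qed
  obtain x0 where x0: "x0 \<in> X" using X(2) by blast
  have lower: "0 \<le> (SUP x\<in>X. tv_dist (kpow S K n x) \<pi>)" for n
  proof -
    have "bdd_above ((\<lambda>x. tv_dist (kpow S K n x) \<pi>) ` X)"
      using tv by (intro bdd_aboveI2[where M = "(1 - e) ^ n"]) blast
    then show ?thesis
      using tv[OF x0] by (intro cSUP_upper2[OF _ x0]) simp_all
  qed
  have upper: "(SUP x\<in>X. tv_dist (kpow S K n x) \<pi>) \<le> (1 - e) ^ n" for n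
    using X(2) tv by (intro cSUP_least) auto
  have lim: "(\<lambda>n. (1 - e) ^ n) \<longlonglongrightarrow> 0"
    using const_pos const_le_1 by (intro LIMSEQ_power_zero) auto
  show ?thesis
    unfolding uniformly_ergodic_def
    by (rule tendsto_sandwich[OF always_eventually always_eventually tendsto_const lim]) (simp_all add: lower upper)
qed

end

section \<open>Independent Metropolis-Hastings kernels\<close>

lemma ennreal_mult_min: "(a::ennreal) * min b c = min (a * b) (a * c)"
  by (cases "b \<le> c") (simp_all add: min_absorb1 min_absorb2 mult_left_mono)

lemma mult_mh_accept:
  assumes "w x \<noteq> \<top>"
  shows "w x * mh_accept w x y = min (w x) (w y)"
proof (cases "w x = 0")
  case False
  then have "w x * (w y / w x) = w y"
    using assms by (metis ennreal_mult_divide_eq ennreal_times_divide mult.commute)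
  then show ?thesis by (simp add: mh_accept_def ennreal_mult_min)
qed (simp add: mh_accept_def)

lemma mh_accept_lower_bound:
  assumes x: "w x \<le> ennreal B" and y: "w y \<le> ennreal B" and B: "0 < B"
  shows "w y * ennreal (1 / B) \<le> mh_accept w x y"
proof -
  obtain r v where r: "w x = ennreal r" "0 \<le> r" "r \<le> B" and v: "w y = ennreal v" "0 \<le> v" "v \<le> B"
    using x y B by (auto simp: le_ennreal_iff)
  have wy: "w y * ennreal (1 / B) = ennreal (v / B)"
    using v B by (simp add: ennreal_mult''[symmetric])
  have "v / B \<le> 1" using v B by simp
  moreover have "v / B \<le> v / r" if "0 < r" using that r v by (simp add: divide_left_mono)
  ultimately show ?thesis
    unfolding wy using r v B
    by (cases "r = 0") (auto simp: mh_accept_def divide_ennreal ennreal_leI)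
qed

locale indep_mh =
  fixes S :: "'b measure" and \<nu> :: "'b measure" and w :: "'b \<Rightarrow> ennreal"
  assumes prob_space_proposal: "prob_space \<nu>"
    and sets_proposal[measurable_cong]: "sets \<nu> = sets S"
    and weight_measurable[measurable]: "w \<in> borel_measurable S"
begin

lemma space_proposal: "space \<nu> = space S"
  using sets_proposal by (rule sets_eq_imp_space_eq)

lemma mh_accept_measurable[measurable]: "(\<lambda>(x, y). mh_accept w x y) \<in> borel_measurable (S \<Otimes>\<^sub>M S)"
  unfolding mh_accept_def by measurable

lemma mh_accept_measurable_snd[measurable]: "mh_accept w x \<in> borel_measurable S"
  unfolding mh_accept_def by measurable

lemma borel_measurable_nn_integral_proposal[measurable (raw)]:
  assumes "case_prod f \<in> borel_measurable (S \<Otimes>\<^sub>M S)"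
  shows "(\<lambda>x. \<integral>\<^sup>+y. f x y \<partial>\<nu>) \<in> borel_measurable S"
  using assms sigma_finite_measure.borel_measurable_nn_integral[OF prob_space_imp_sigma_finite[OF prob_space_proposal]]
  by (simp cong: measurable_cong_sets add: sets_pair_measure_cong[OF refl sets_proposal])

lemma nn_integral_mh_accept_le_1: "(\<integral>\<^sup>+y. mh_accept w x y \<partial>\<nu>) \<le> 1"
proof -
  have "(\<integral>\<^sup>+y. mh_accept w x y \<partial>\<nu>) \<le> (\<integral>\<^sup>+y. 1 \<partial>\<nu>)"
    by (intro nn_integral_mono) (simp add: mh_accept_def)
  then show ?thesis using prob_space_proposal by (simp add: prob_space.emeasure_space_1)
qed

lemma emeasure_imh_kernel:
  assumes A: "A \<in> sets S"
  shows "emeasure (imh_kernel S \<nu> w x) A =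
    (\<integral>\<^sup>+y. mh_accept w x y * indicator A y \<partial>\<nu>) + (1 - (\<integral>\<^sup>+y. mh_accept w x y \<partial>\<nu>)) * indicator A x"
  unfolding imh_kernel_def
proof (rule emeasure_measure_of_sigma[OF sets.sigma_algebra_axioms _ _ A])
  let ?s = "1 - (\<integral>\<^sup>+y. mh_accept w x y \<partial>\<nu>)"
  show "positive (sets S) (\<lambda>A. (\<integral>\<^sup>+y. mh_accept w x y * indicator A y \<partial>\<nu>) + ?s * indicator A x)"
    by (simp add: positive_def)
  show "countably_additive (sets S) (\<lambda>A. (\<integral>\<^sup>+y. mh_accept w x y * indicator A y \<partial>\<nu>) + ?s * indicator A x)"
  proof (rule countably_additiveI)
    fix F :: "nat \<Rightarrow> 'b set" assume F: "range F \<subseteq> sets S" "disjoint_family F"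
    have [measurable]: "F i \<in> sets S" for i using F(1) by auto
    have "(\<Sum>i. (\<integral>\<^sup>+y. mh_accept w x y * indicator (F i) y \<partial>\<nu>) + ?s * indicator (F i) x)
        = (\<Sum>i. \<integral>\<^sup>+y. mh_accept w x y * indicator (F i) y \<partial>\<nu>) + (\<Sum>i. ?s * indicator (F i) x)"
      by (rule suminf_add[OF summableI summableI, symmetric])
    also have "(\<Sum>i. \<integral>\<^sup>+y. mh_accept w x y * indicator (F i) y \<partial>\<nu>)
        = (\<integral>\<^sup>+y. (\<Sum>i. mh_accept w x y * indicator (F i) y) \<partial>\<nu>)"
      by (rule nn_integral_suminf[symmetric]) measurable
    also have "\<dots> = (\<integral>\<^sup>+y. mh_accept w x y * indicator (\<Union>i. F i) y \<partial>\<nu>)"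
      by (simp only: ennreal_suminf_cmult suminf_indicator[OF F(2)])
    also have "(\<Sum>i. ?s * indicator (F i) x) = ?s * indicator (\<Union>i. F i) x"
      by (simp only: ennreal_suminf_cmult suminf_indicator[OF F(2)])
    finally show "(\<Sum>i. (\<integral>\<^sup>+y. mh_accept w x y * indicator (F i) y \<partial>\<nu>) + ?s * indicator (F i) x)
        = (\<integral>\<^sup>+y. mh_accept w x y * indicator (\<Union>i. F i) y \<partial>\<nu>) + ?s * indicator (\<Union>i. F i) x" .
  qed
qed

lemma sets_imh_kernel[simp, measurable_cong]: "sets (imh_kernel S \<nu> w x) = sets S"
  unfolding imh_kernel_def by (simp add: sets.sets_measure_of_eq)

lemma space_imh_kernel[simp]: "space (imh_kernel S \<nu> w x) = space S"
  unfolding imh_kernel_def by (simp add: space_measure_of_conv)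

lemma prob_space_imh_kernel:
  assumes x: "x \<in> space S"
  shows "prob_space (imh_kernel S \<nu> w x)"
proof
  have "(\<integral>\<^sup>+y. mh_accept w x y * indicator (space S) y \<partial>\<nu>) = (\<integral>\<^sup>+y. mh_accept w x y \<partial>\<nu>)"
    by (rule nn_integral_cong) (simp add: space_proposal)
  then have "emeasure (imh_kernel S \<nu> w x) (space S)
      = (\<integral>\<^sup>+y. mh_accept w x y \<partial>\<nu>) + (1 - (\<integral>\<^sup>+y. mh_accept w x y \<partial>\<nu>))"
    using x by (simp add: emeasure_imh_kernel)
  also have "\<dots> = 1" by (rule add_diff_inverse_ennreal[OF nn_integral_mh_accept_le_1])
  finally show "emeasure (imh_kernel S \<nu> w x) (space (imh_kernel S \<nu> w x)) = 1" by simp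
qed

lemma imh_kernel_measurable: "imh_kernel S \<nu> w \<in> S \<rightarrow>\<^sub>M prob_algebra S"
proof (rule measurable_prob_algebraI)
  have "(\<lambda>x. emeasure (imh_kernel S \<nu> w x) A) \<in> borel_measurable S" if [measurable]: "A \<in> sets S" for A
  proof -
    have "(\<lambda>x. (\<integral>\<^sup>+y. mh_accept w x y * indicator A y \<partial>\<nu>) + (1 - (\<integral>\<^sup>+y. mh_accept w x y \<partial>\<nu>)) * indicator A x)
        \<in> borel_measurable S"
      by measurable
    then show ?thesis by (simp add: emeasure_imh_kernel cong: measurable_cong)
  qed
  then show "imh_kernel S \<nu> w \<in> S \<rightarrow>\<^sub>M subprob_algebra S"
    by (intro measurable_subprob_algebra) (auto simp: prob_space_imh_kernel prob_space_imp_subprob_space)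
qed (rule prob_space_imh_kernel)

(* Detailed balance: w x * mh_accept w x y = min (w x) (w y) is symmetric in x and y. *)
lemma mh_accept_balance:
  assumes finite: "\<And>x. x \<in> space S \<Longrightarrow> w x \<noteq> \<top>" and A[measurable]: "A \<in> sets S"
  shows "(\<integral>\<^sup>+x. c * w x * (\<integral>\<^sup>+y. mh_accept w x y * indicator A y \<partial>\<nu>) \<partial>\<nu>)
       = (\<integral>\<^sup>+x. c * w x * (\<integral>\<^sup>+y. mh_accept w x y \<partial>\<nu>) * indicator A x \<partial>\<nu>)"
proof -
  interpret \<nu>: prob_space \<nu> by (rule prob_space_proposal)
  interpret pair_sigma_finite \<nu> \<nu> by unfold_locales
  define h where "h x y = c * min (w x) (w y)" for x y
  have h_eq: "c * w x * mh_accept w x y = h x y" if "x \<in> space \<nu>" for x y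
    using mult_mh_accept[of w x y] finite[of x] that by (simp add: h_def space_proposal mult.assoc)
  have [measurable]: "(\<lambda>(x, y). h x y * indicator A y) \<in> borel_measurable (\<nu> \<Otimes>\<^sub>M \<nu>)"
    unfolding h_def by measurable
  have "c * w x * (\<integral>\<^sup>+y. mh_accept w x y * indicator A y \<partial>\<nu>) = (\<integral>\<^sup>+y. h x y * indicator A y \<partial>\<nu>)"
    if "x \<in> space \<nu>" for x
    by (subst nn_integral_cmult[symmetric]) (auto simp: h_eq[OF that, symmetric] mult.assoc)
  then have "(\<integral>\<^sup>+x. c * w x * (\<integral>\<^sup>+y. mh_accept w x y * indicator A y \<partial>\<nu>) \<partial>\<nu>)
      = (\<integral>\<^sup>+x. \<integral>\<^sup>+y. h x y * indicator A y \<partial>\<nu> \<partial>\<nu>)"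
    by (rule nn_integral_cong)
  also have "\<dots> = (\<integral>\<^sup>+y. \<integral>\<^sup>+x. h x y * indicator A y \<partial>\<nu> \<partial>\<nu>)"
    by (rule Fubini') measurable
  also have "\<dots> = (\<integral>\<^sup>+y. c * w y * (\<integral>\<^sup>+x. mh_accept w y x \<partial>\<nu>) * indicator A y \<partial>\<nu>)"
  proof (rule nn_integral_cong)
    fix y assume y: "y \<in> space \<nu>"
    have "c * w y * (\<integral>\<^sup>+x. mh_accept w y x \<partial>\<nu>) = (\<integral>\<^sup>+x. h x y \<partial>\<nu>)"
      by (subst nn_integral_cmult[symmetric]) (auto simp: h_eq[OF y] h_def min.commute)
    then show "(\<integral>\<^sup>+x. h x y * indicator A y \<partial>\<nu>) = c * w y * (\<integral>\<^sup>+x. mh_accept w y x \<partial>\<nu>) * indicator A y"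
      by (simp add: nn_integral_multc h_def)
  qed
  finally show ?thesis .
qed

lemma imh_kernel_stationary:
  assumes finite: "\<And>x. x \<in> space S \<Longrightarrow> w x \<noteq> \<top>"
    and target: "prob_space (density \<nu> (\<lambda>x. c * w x))"
  shows "bind (density \<nu> (\<lambda>x. c * w x)) (imh_kernel S \<nu> w) = density \<nu> (\<lambda>x. c * w x)"
    (is "bind ?\<pi> ?K = ?\<pi>")
proof (rule measure_eqI)
  have \<pi>: "?\<pi> \<in> space (prob_algebra S)"
    using target by (simp add: space_prob_algebra sets_proposal)
  show sets: "sets (bind ?\<pi> ?K) = sets ?\<pi>"
    using sets_bind'[OF \<pi> imh_kernel_measurable] by (simp add: sets_proposal)
  fix A assume "A \<in> sets (bind ?\<pi> ?K)"
  then have A[measurable]: "A \<in> sets S" using sets by (simp add: sets_proposal)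
  define s where "s x = (\<integral>\<^sup>+y. mh_accept w x y \<partial>\<nu>)" for x
  have s_le_1: "s x \<le> 1" for x unfolding s_def by (rule nn_integral_mh_accept_le_1)
  have [measurable]: "s \<in> borel_measurable S" unfolding s_def[abs_def] by measurable
  have "emeasure (bind ?\<pi> ?K) A = (\<integral>\<^sup>+x. c * w x * emeasure (?K x) A \<partial>\<nu>)"
    using emeasure_bind_prob_algebra[OF \<pi> imh_kernel_measurable A]
      measurable_emeasure_kernel[OF measurable_prob_algebraD[OF imh_kernel_measurable] A]
    by (simp add: nn_integral_density)
  also have "\<dots> = (\<integral>\<^sup>+x. c * w x * (\<integral>\<^sup>+y. mh_accept w x y * indicator A y \<partial>\<nu>) \<partial>\<nu>)
                  + (\<integral>\<^sup>+x. c * w x * (1 - s x) * indicator A x \<partial>\<nu>)"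
    by (simp add: emeasure_imh_kernel s_def distrib_left mult.assoc nn_integral_add)
  also have "\<dots> = (\<integral>\<^sup>+x. c * w x * s x * indicator A x \<partial>\<nu>) + (\<integral>\<^sup>+x. c * w x * (1 - s x) * indicator A x \<partial>\<nu>)"
    unfolding s_def by (simp only: mh_accept_balance[OF finite A])
  also have "\<dots> = (\<integral>\<^sup>+x. c * w x * (s x + (1 - s x)) * indicator A x \<partial>\<nu>)"
    by (simp add: nn_integral_add[symmetric] distrib_left distrib_right)
  also have "\<dots> = emeasure ?\<pi> A"
    by (simp add: add_diff_inverse_ennreal[OF s_le_1] emeasure_density)
  finally show "emeasure (bind ?\<pi> ?K) A = emeasure ?\<pi> A" .
qed

lemma imh_kernel_minorization:
  assumes bounded: "\<And>x. x \<in> space S \<Longrightarrow> w x \<le> ennreal B" and B: "0 < B" and c: "0 < c"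
    and x: "x \<in> space S" and A[measurable]: "A \<in> sets S"
  shows "ennreal (1 / (c * B)) * emeasure (density \<nu> (\<lambda>x. ennreal c * w x)) A
           \<le> emeasure (imh_kernel S \<nu> w x) A"
proof -
  have "ennreal (1 / (c * B)) * emeasure (density \<nu> (\<lambda>x. ennreal c * w x)) A
      = (\<integral>\<^sup>+y. ennreal (1 / (c * B)) * ennreal c * w y * indicator A y \<partial>\<nu>)"
    by (simp add: emeasure_density nn_integral_cmult[symmetric] mult.assoc)
  also have "\<dots> = (\<integral>\<^sup>+y. w y * ennreal (1 / B) * indicator A y \<partial>\<nu>)"
    using B c by (simp add: ennreal_mult''[symmetric] mult.commute)
  also have "\<dots> \<le> (\<integral>\<^sup>+y. mh_accept w x y * indicator A y \<partial>\<nu>)"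
    using mh_accept_lower_bound[of w x B, OF bounded[OF x] bounded B] space_proposal
    by (intro nn_integral_mono mult_right_mono) auto
  also have "\<dots> \<le> emeasure (imh_kernel S \<nu> w x) A"
    by (simp add: emeasure_imh_kernel)
  finally show ?thesis .
qed

lemma doeblin_kernel_imh_kernel:
  assumes bounded: "\<And>x. x \<in> space S \<Longrightarrow> w x \<le> ennreal B" and B: "0 < B" and c: "0 < c"
    and target: "prob_space (density \<nu> (\<lambda>x. ennreal c * w x))"
  shows "doeblin_kernel S (imh_kernel S \<nu> w) (density \<nu> (\<lambda>x. ennreal c * w x)) (1 / (c * B))"
proof
  show "imh_kernel S \<nu> w \<in> S \<rightarrow>\<^sub>M prob_algebra S" by (rule imh_kernel_measurable)
  show "density \<nu> (\<lambda>x. ennreal c * w x) \<in> space (prob_algebra S)"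
    using target by (simp add: space_prob_algebra sets_proposal)
  have "w x \<noteq> \<top>" if "x \<in> space S" for x
    using bounded[OF that] by (auto simp: top_unique)
  then show "bind (density \<nu> (\<lambda>x. ennreal c * w x)) (imh_kernel S \<nu> w) = density \<nu> (\<lambda>x. ennreal c * w x)"
    by (rule imh_kernel_stationary[OF _ target])
  show "0 < 1 / (c * B)" using B c by simp
  show "ennreal (1 / (c * B)) * emeasure (density \<nu> (\<lambda>x. ennreal c * w x)) A \<le> emeasure (imh_kernel S \<nu> w x) A"
    if "x \<in> space S" and "A \<in> sets S" for x A
    by (rule imh_kernel_minorization[OF bounded B c that])
qed

end

section \<open>Empirical measures and extension of paths\<close>

lemma nn_integral_uniform_count_measure:
  assumes "finite A" and "A \<noteq> {}"
  shows "(\<integral>\<^sup>+x. f x \<partial>uniform_count_measure A) = (\<Sum>x\<in>A. f x) / of_nat (card A)"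
proof -
  have "ennreal (1 / real (card A)) = 1 / of_nat (card A)"
    using assms by (simp add: divide_ennreal[symmetric] ennreal_of_nat_eq_real_of_nat card_gt_0_iff)
  then show ?thesis
    using assms(1)
    by (simp add: uniform_count_measure_def nn_integral_point_measure_finite ennreal_times_divide
      mult.commute divide_ennreal_def sum_distrib_right)
qed

lemma emp_measure_eq_distr:
  assumes N: "0 < N" and xs: "\<And>i. i < N \<Longrightarrow> xs i \<in> space S"
  shows "emp_measure S N xs = distr (uniform_count_measure {..<N}) S xs"
proof -
  let ?R = "distr (uniform_count_measure {..<N}) S xs"
  have xs_meas: "xs \<in> uniform_count_measure {..<N} \<rightarrow>\<^sub>M S"
    unfolding measurable_cong_sets[OF sets_uniform_count_measure_count_space refl]
      measurable_count_space_eq1 using xs by auto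
  have "emp_measure S N xs = measure_of (space S) (sets S) (emeasure ?R)"
    unfolding emp_measure_def
  proof (rule measure_of_eq[OF sets.space_closed])
    fix A assume "A \<in> sigma_sets (space S) (sets S)"
    then have A: "A \<in> sets S" by (simp add: sets.sigma_sets_eq)
    have "emeasure ?R A = (\<integral>\<^sup>+i. indicator A (xs i) \<partial>uniform_count_measure {..<N})"
      using xs_meas A by (simp add: nn_integral_distr flip: nn_integral_indicator)
    also have "\<dots> = (\<Sum>i<N. indicator A (xs i)) / of_nat N"
      using N by (subst nn_integral_uniform_count_measure) auto
    finally show "(\<Sum>i<N. indicator A (xs i)) / of_nat N = emeasure ?R A" by simp
  qed
  also have "\<dots> = ?R" by (simp add: measure_of_of_measure[of ?R, simplified])
  finally show ?thesis .
qed

lemma sets_emp_measure[simp, measurable_cong]: "sets (emp_measure S N xs) = sets S"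
  unfolding emp_measure_def by (simp add: sets.sets_measure_of_eq)

context
  fixes S :: "'b measure" and N :: nat and xs :: "nat \<Rightarrow> 'b"
  assumes N: "0 < N" and xs: "\<And>i. i < N \<Longrightarrow> xs i \<in> space S"
begin

lemma samples_measurable: "xs \<in> uniform_count_measure {..<N} \<rightarrow>\<^sub>M S"
  unfolding measurable_cong_sets[OF sets_uniform_count_measure_count_space refl]
    measurable_count_space_eq1 using xs by auto

lemma nn_integral_emp_measure:
  assumes "f \<in> borel_measurable S"
  shows "(\<integral>\<^sup>+y. f y \<partial>emp_measure S N xs) = (\<Sum>i<N. f (xs i)) / of_nat N"
  using assms N
  by (simp add: emp_measure_eq_distr[OF N xs] nn_integral_distr[OF samples_measurable])
    (subst nn_integral_uniform_count_measure; auto)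

lemma integral_emp_measure:
  assumes "f \<in> borel_measurable S"
  shows "(\<integral>y. f y \<partial>emp_measure S N xs) = (\<Sum>i<N. f (xs i)) / N"
  using assms
  by (simp add: emp_measure_eq_distr[OF N xs] integral_distr[OF samples_measurable]
    integral_uniform_count_measure)

end

lemma sets_ext_prod[simp, measurable_cong]: "sets (ext_prod M k \<mu> p) = sets (Ek M k)"
  unfolding ext_prod_def by (simp add: sets.sets_measure_of_eq)

lemma space_ext_prod[simp]: "space (ext_prod M k \<mu> p) = space (Ek M k)"
  unfolding ext_prod_def by (simp add: space_measure_of_conv)

locale path_space =
  fixes M :: "'a measure" and k :: nat
  assumes sigma_finite: "sigma_finite_measure M"
    and step_pos: "0 < k"
begin

sublocale M: sigma_finite_measure M by (rule sigma_finite)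

lemma Ek_prev: "Ek M (k - 1) = PiM {..<k} (\<lambda>_. M)"
  using step_pos by (simp add: Ek_def atMost_atLeast0 lessThan_atLeast0 atLeastLessThanSuc_atLeastAtMost[symmetric])

lemma Ek_insert: "Ek M k = PiM (insert k {..<k}) (\<lambda>_. M)"
  by (simp add: Ek_def lessThan_Suc_atMost[symmetric] lessThan_Suc)

lemma space_Ek_prev: "space (Ek M (k - 1)) = PiE {..<k} (\<lambda>_. space M)"
  unfolding Ek_prev by (simp add: space_PiM)

lemma measurable_extend[measurable]: "(\<lambda>(y, a). y(k := a)) \<in> Ek M (k - 1) \<Otimes>\<^sub>M M \<rightarrow>\<^sub>M Ek M k"
  unfolding Ek_prev Ek_insert by (rule measurable_add_dim)

lemma measurable_truncate[measurable]: "(\<lambda>x. restrict x {..<k}) \<in> Ek M k \<rightarrow>\<^sub>M Ek M (k - 1)"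
  unfolding Ek_prev Ek_insert by (rule measurable_restrict_subset) auto

lemma restrict_prev: "y \<in> space (Ek M (k - 1)) \<Longrightarrow> restrict y {..<k} = y"
  unfolding space_Ek_prev by (rule PiE_restrict)

lemma extend_in_space: "y \<in> space (Ek M (k - 1)) \<Longrightarrow> a \<in> space M \<Longrightarrow> y(k := a) \<in> space (Ek M k)"
  using measurable_space[OF measurable_extend, of "(y, a)"] by (simp add: space_pair_measure)

context
  fixes \<mu> :: "(nat \<Rightarrow> 'a) measure" and p :: "(nat \<Rightarrow> 'a) \<Rightarrow> 'a \<Rightarrow> real"
  assumes sets_\<mu>[measurable_cong]: "sets \<mu> = sets (Ek M (k - 1))"
    and p_measurable[measurable]: "(\<lambda>(y, a). p y a) \<in> borel_measurable (Ek M (k - 1) \<Otimes>\<^sub>M M)"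
begin

lemma nn_integral_distr_extend:
  assumes [measurable]: "g \<in> borel_measurable (Ek M k)"
  shows "(\<integral>\<^sup>+x. g x \<partial>distr (density (\<mu> \<Otimes>\<^sub>M M) (\<lambda>(y, a). ennreal (p y a))) (Ek M k) (\<lambda>(y, a). y(k := a)))
       = (\<integral>\<^sup>+y. \<integral>\<^sup>+a. ennreal (p y a) * g (y(k := a)) \<partial>M \<partial>\<mu>)"
proof -
  have [measurable_cong]: "sets (\<mu> \<Otimes>\<^sub>M M) = sets (Ek M (k - 1) \<Otimes>\<^sub>M M)"
    by (rule sets_pair_measure_cong[OF sets_\<mu> refl])
  have "(\<integral>\<^sup>+x. g x \<partial>distr (density (\<mu> \<Otimes>\<^sub>M M) (\<lambda>(y, a). ennreal (p y a))) (Ek M k) (\<lambda>(y, a). y(k := a)))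
      = (\<integral>\<^sup>+\<omega>. ennreal (case \<omega> of (y, a) \<Rightarrow> p y a) * g (case \<omega> of (y, a) \<Rightarrow> y(k := a)) \<partial>\<mu> \<Otimes>\<^sub>M M)"
    by (simp add: nn_integral_distr nn_integral_density split_beta')
  also have "\<dots> = (\<integral>\<^sup>+y. \<integral>\<^sup>+a. ennreal (p y a) * g (y(k := a)) \<partial>M \<partial>\<mu>)"
    by (subst M.nn_integral_fst[symmetric]) simp_all
  finally show ?thesis .
qed

lemma ext_prod_eq_distr:
  "ext_prod M k \<mu> p = distr (density (\<mu> \<Otimes>\<^sub>M M) (\<lambda>(y, a). ennreal (p y a))) (Ek M k) (\<lambda>(y, a). y(k := a))"
  (is "_ = ?R")
proof -
  have "ext_prod M k \<mu> p = measure_of (space (Ek M k)) (sets (Ek M k)) (emeasure ?R)"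
    unfolding ext_prod_def
  proof (rule measure_of_eq[OF sets.space_closed])
    fix A assume "A \<in> sigma_sets (space (Ek M k)) (sets (Ek M k))"
    then have [measurable]: "A \<in> sets (Ek M k)" by (simp add: sets.sigma_sets_eq)
    show "(\<integral>\<^sup>+y. \<integral>\<^sup>+a. ennreal (p y a) * indicator A (y(k := a)) \<partial>M \<partial>\<mu>) = emeasure ?R A"
      using nn_integral_distr_extend[of "indicator A"] by simp
  qed
  also have "\<dots> = ?R" using measure_of_of_measure[of ?R] by simp
  finally show ?thesis .
qed

lemma nn_integral_ext_prod:
  "g \<in> borel_measurable (Ek M k) \<Longrightarrow>
    (\<integral>\<^sup>+x. g x \<partial>ext_prod M k \<mu> p) = (\<integral>\<^sup>+y. \<integral>\<^sup>+a. ennreal (p y a) * g (y(k := a)) \<partial>M \<partial>\<mu>)"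
  unfolding ext_prod_eq_distr by (rule nn_integral_distr_extend)

end

end

section \<open>One step of the hidden Markov model and the draw kernel\<close>

definition hmm_incr :: "('a \<Rightarrow> 'a \<Rightarrow> real) \<Rightarrow> (nat \<Rightarrow> 'a \<Rightarrow> real) \<Rightarrow> nat \<Rightarrow> (nat \<Rightarrow> 'a) \<Rightarrow> 'a \<Rightarrow> real" where
  "hmm_incr tr lik k y a = tr (y (k - 1)) a * lik k a"

lemma hmm_gamma_extend:
  assumes "0 < k"
  shows "hmm_gamma p0 tr lik k (y(k := a)) = hmm_gamma p0 tr lik (k - 1) y * hmm_incr tr lik k y a"
proof -
  obtain m where k: "k = Suc m" using assms by (cases k) auto
  have "(\<Prod>l\<in>{1..m}. tr ((y(k := a)) (l - 1)) ((y(k := a)) l) * lik l ((y(k := a)) l))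
      = (\<Prod>l\<in>{1..m}. tr (y (l - 1)) (y l) * lik l (y l))"
    using k by (intro prod.cong) auto
  then show ?thesis
    using k by (simp add: hmm_gamma_def hmm_incr_def prod.nat_ivl_Suc' mult_ac)
qed

lemma hmm_supp_nonempty:
  assumes "0 < hmm_Z M p0 tr lik k"
  shows "hmm_supp M p0 tr lik k \<noteq> {}"
proof
  assume "hmm_supp M p0 tr lik k = {}"
  then have gamma_nonpos: "hmm_gamma p0 tr lik k x \<le> 0" if "x \<in> space (Ek M k)" for x
    using that assms by (auto simp: hmm_supp_def hmm_post_def divide_pos_pos not_less[symmetric])
  have "0 \<le> (\<integral>x. - hmm_gamma p0 tr lik k x \<partial>Ek M k)"
    by (rule Bochner_Integration.integral_nonneg) (simp add: gamma_nonpos)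
  then have "hmm_Z M p0 tr lik k \<le> 0"
    unfolding hmm_Z_def by simp
  with assms show False by simp
qed

locale hmm_step = path_space M k
  for M :: "'a measure" and k :: nat +
  fixes p0 :: "'a \<Rightarrow> real" and tr :: "'a \<Rightarrow> 'a \<Rightarrow> real" and lik :: "nat \<Rightarrow> 'a \<Rightarrow> real"
  assumes p0_measurable[measurable]: "p0 \<in> borel_measurable M" and p0_nonneg: "\<And>a. 0 \<le> p0 a"
    and tr_measurable[measurable]: "(\<lambda>(u, v). tr u v) \<in> borel_measurable (M \<Otimes>\<^sub>M M)"
    and tr_nonneg: "\<And>u v. 0 \<le> tr u v"
    and lik_measurable[measurable]: "\<And>l. lik l \<in> borel_measurable M" and lik_nonneg: "\<And>l a. 0 \<le> lik l a"
    and Z_pos: "0 < hmm_Z M p0 tr lik (k - 1)" "0 < hmm_Z M p0 tr lik k"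
begin

abbreviation "\<gamma> \<equiv> hmm_gamma p0 tr lik"
abbreviation "incr \<equiv> hmm_incr tr lik k"

lemma hmm_gamma_nonneg: "0 \<le> \<gamma> j x"
  unfolding hmm_gamma_def using p0_nonneg tr_nonneg lik_nonneg by (auto intro!: mult_nonneg_nonneg prod_nonneg)

lemma hmm_incr_nonneg: "0 \<le> incr y a"
  unfolding hmm_incr_def using tr_nonneg lik_nonneg by simp

lemma measurable_hmm_gamma[measurable]: "\<gamma> j \<in> borel_measurable (Ek M j)"
proof -
  have "(\<lambda>x. tr (x (l - 1)) (x l) * lik l (x l)) \<in> borel_measurable (PiM {..j} (\<lambda>_. M))"
    if "l \<in> {1..j}" for l
  proof -
    have "l - 1 \<in> {..j}" "l \<in> {..j}" using that by auto
    then show ?thesis by measurable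
  qed
  then show ?thesis unfolding hmm_gamma_def Ek_def by measurable
qed

lemma measurable_hmm_post[measurable]: "hmm_post M p0 tr lik j \<in> borel_measurable (Ek M j)"
  unfolding hmm_post_def by measurable

lemma measurable_hmm_incr[measurable]: "(\<lambda>(y, a). incr y a) \<in> borel_measurable (Ek M (k - 1) \<Otimes>\<^sub>M M)"
proof -
  have "k - 1 \<in> {..<k}" using step_pos by simp
  then have "(\<lambda>y. y (k - 1)) \<in> Ek M (k - 1) \<rightarrow>\<^sub>M M"
    unfolding Ek_prev by measurable
  then show ?thesis unfolding hmm_incr_def by measurable
qed

lemma hmm_post_extend: "hmm_post M p0 tr lik k (y(k := a)) = \<gamma> (k - 1) y * incr y a / hmm_Z M p0 tr lik k"
  unfolding hmm_post_def hmm_gamma_extend[OF step_pos] ..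

lemma hmm_marg_eq: "hmm_marg M p0 tr lik k y = \<gamma> (k - 1) y * (\<integral>a. incr y a \<partial>M) / hmm_Z M p0 tr lik k"
  unfolding hmm_marg_def hmm_post_extend by simp

lemma measurable_hmm_cond[measurable]:
  "(\<lambda>(y, a). hmm_cond M p0 tr lik k y a) \<in> borel_measurable (Ek M (k - 1) \<Otimes>\<^sub>M M)"
  unfolding hmm_cond_def hmm_marg_def by measurable

lemma measurable_hmm_pred[measurable]: "hmm_pred M p0 tr lik k \<in> borel_measurable (Ek M (k - 1))"
  unfolding hmm_pred_def hmm_marg_def by measurable

lemma hmm_cond_nonneg: "0 \<le> hmm_cond M p0 tr lik k y a"
  unfolding hmm_cond_def hmm_post_extend hmm_marg_eq using Z_pos hmm_gamma_nonneg hmm_incr_nonneg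
  by (auto intro!: divide_nonneg_nonneg mult_nonneg_nonneg integral_nonneg_AE)

lemma hmm_pred_nonneg: "0 \<le> hmm_pred M p0 tr lik k y"
  unfolding hmm_pred_def hmm_marg_eq hmm_post_def using Z_pos hmm_gamma_nonneg hmm_incr_nonneg
  by (auto intro!: divide_nonneg_nonneg mult_nonneg_nonneg integral_nonneg_AE)

lemma hmm_pred_eq:
  assumes "0 < \<gamma> (k - 1) y"
  shows "hmm_pred M p0 tr lik k y = (\<integral>a. incr y a \<partial>M) * hmm_Z M p0 tr lik (k - 1) / hmm_Z M p0 tr lik k"
  unfolding hmm_pred_def hmm_marg_eq hmm_post_def using assms Z_pos by (simp add: field_simps)

lemma hmm_cond_mult_pred:
  assumes pos: "0 < \<gamma> (k - 1) y" and int: "integrable M (incr y)"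
  shows "AE a in M. hmm_cond M p0 tr lik k y a * hmm_pred M p0 tr lik k y
                      = incr y a * hmm_Z M p0 tr lik (k - 1) / hmm_Z M p0 tr lik k"
proof (cases "(\<integral>a. incr y a \<partial>M) = 0")
  case True
  \<comment> \<open>then hmm_cond y is 0 by division by zero, and incr y vanishes almost everywhere\<close>
  then have "AE a in M. incr y a = 0"
    using integral_nonneg_eq_0_iff_AE[OF int] hmm_incr_nonneg by simp
  then show ?thesis
    by eventually_elim (simp add: hmm_pred_eq[OF pos] True)
next
  case False
  have "hmm_cond M p0 tr lik k y a = incr y a / (\<integral>a. incr y a \<partial>M)" for a
    unfolding hmm_cond_def hmm_post_extend hmm_marg_eq using pos Z_pos by (simp add: field_simps)
  then show ?thesis
    using False by (intro AE_I2) (simp add: hmm_pred_eq[OF pos])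
qed

end

locale smc_step = hmm_step M k p0 tr lik
  for M :: "'a measure" and k :: nat and p0 tr lik +
  fixes q0 :: "'a \<Rightarrow> real" and q :: "nat \<Rightarrow> (nat \<Rightarrow> 'a) \<Rightarrow> 'a \<Rightarrow> real"
    and N :: nat and xs :: "nat \<Rightarrow> nat \<Rightarrow> 'a" and B :: real
  assumes q_measurable: "(\<lambda>x. q k (restrict x {..<k}) (x k)) \<in> borel_measurable (Ek M k)"
    and q_nonneg: "\<And>y a. 0 \<le> q k y a"
    and q_prob: "\<And>y. y \<in> space (Ek M (k - 1)) \<Longrightarrow> (\<integral>\<^sup>+a. ennreal (q k y a) \<partial>M) = 1"
    and weight_bounded_on_supp: "\<And>x. x \<in> hmm_supp M p0 tr lik k \<Longrightarrow> smc_weight p0 tr lik q0 q k x \<le> ennreal B"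
    and samples_pos: "0 < N"
    and samples: "\<And>i. i < N \<Longrightarrow> xs i \<in> hmm_supp M p0 tr lik (k - 1)"
    and pred_integral_pos: "0 < (\<integral>y. hmm_pred M p0 tr lik k y \<partial>emp_measure (Ek M (k - 1)) N xs)"
begin

abbreviation "w \<equiv> smc_weight p0 tr lik q0 q k"
abbreviation "emp \<equiv> emp_measure (Ek M (k - 1)) N xs"

lemma sample_in_space: "i < N \<Longrightarrow> xs i \<in> space (Ek M (k - 1))"
  using samples by (auto simp: hmm_supp_def)

lemma sample_gamma_pos: "i < N \<Longrightarrow> 0 < \<gamma> (k - 1) (xs i)"
  using samples Z_pos(1) hmm_gamma_nonneg[of "k - 1" "xs i"]
  by (auto simp: hmm_supp_def hmm_post_def zero_less_divide_iff)

lemma measurable_proposal[measurable]: "(\<lambda>(y, a). q k y a) \<in> borel_measurable (Ek M (k - 1) \<Otimes>\<^sub>M M)"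
proof -
  have "(\<lambda>(y, a). q k (restrict (y(k := a)) {..<k}) ((y(k := a)) k)) \<in> borel_measurable (Ek M (k - 1) \<Otimes>\<^sub>M M)"
    using measurable_compose[OF measurable_extend q_measurable] by (simp add: split_beta')
  then show ?thesis
    by (rule measurable_cong[THEN iffD1, rotated]) (auto simp: space_pair_measure restrict_prev)
qed

lemma smc_weight_eq:
  "w x = ennreal (\<gamma> k x) / ennreal (\<gamma> (k - 1) (restrict x {..<k}) * q k (restrict x {..<k}) (x k))"
  using step_pos by (simp add: smc_weight_def)

lemma measurable_smc_weight[measurable]: "w \<in> borel_measurable (Ek M k)"
proof -
  note q_measurable[measurable] measurable_compose[OF measurable_truncate measurable_hmm_gamma, measurable]
  show ?thesis unfolding smc_weight_eq[abs_def] by measurable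
qed

lemma smc_weight_extend:
  "y \<in> space (Ek M (k - 1)) \<Longrightarrow>
    w (y(k := a)) = ennreal (\<gamma> (k - 1) y * incr y a) / ennreal (\<gamma> (k - 1) y * q k y a)"
  unfolding smc_weight_eq by (simp add: restrict_prev hmm_gamma_extend[OF step_pos])

lemma smc_weight_bounded: "x \<in> space (Ek M k) \<Longrightarrow> w x \<le> ennreal B"
proof (cases "x \<in> hmm_supp M p0 tr lik k")
  case False
  \<comment> \<open>then gamma_k x = 0, and the weight is 0 / _ = 0 in ennreal\<close>
  assume x: "x \<in> space (Ek M k)"
  then have "\<gamma> k x = 0"
    using False Z_pos(2) hmm_gamma_nonneg[of k x] by (auto simp: hmm_supp_def hmm_post_def zero_less_divide_iff)
  then show ?thesis by (simp add: smc_weight_eq)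
qed (rule weight_bounded_on_supp)

lemma proposal_mult_weight:
  assumes y: "y \<in> space (Ek M (k - 1))" and pos: "0 < \<gamma> (k - 1) y" and a: "a \<in> space M"
  shows "ennreal (q k y a) * w (y(k := a)) = ennreal (incr y a)"
proof (cases "q k y a = 0")
  case True
  have "w (y(k := a)) \<noteq> \<top>"
    using smc_weight_bounded[OF extend_in_space[OF y a]] by (auto simp: top_unique)
  then have "incr y a = 0"
    using True pos hmm_incr_nonneg[of y a] by (auto simp: smc_weight_extend[OF y] ennreal_divide_eq_top_iff split: if_splits)
  with True show ?thesis by simp
next
  case False
  then have "0 < q k y a" using q_nonneg[of y a] by simp
  then have "w (y(k := a)) = ennreal (incr y a / q k y a)"
    using pos hmm_incr_nonneg[of y a] by (simp add: smc_weight_extend[OF y] divide_ennreal)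
  with \<open>0 < q k y a\<close> show ?thesis
    using hmm_incr_nonneg[of y a] by (simp add: ennreal_mult[symmetric])
qed

lemma integrable_hmm_incr:
  assumes y: "y \<in> space (Ek M (k - 1))" and pos: "0 < \<gamma> (k - 1) y"
  shows "integrable M (incr y)"
proof (rule integrableI_nonneg)
  show "incr y \<in> borel_measurable M" using measurable_Pair2[OF measurable_hmm_incr y] by simp
  have "(\<integral>\<^sup>+a. ennreal (incr y a) \<partial>M) = (\<integral>\<^sup>+a. ennreal (q k y a) * w (y(k := a)) \<partial>M)"
    by (intro nn_integral_cong) (simp add: proposal_mult_weight[OF y pos])
  also have "\<dots> \<le> (\<integral>\<^sup>+a. ennreal (q k y a) * ennreal B \<partial>M)"
    using smc_weight_bounded extend_in_space[OF y] by (intro nn_integral_mono mult_left_mono) auto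
  also have "\<dots> = ennreal B"
    using measurable_Pair2[OF measurable_proposal y] by (simp add: nn_integral_multc q_prob[OF y])
  finally show "(\<integral>\<^sup>+a. ennreal (incr y a) \<partial>M) < \<infinity>" by (simp add: le_less_trans)
qed (simp add: hmm_incr_nonneg)

lemma nn_integral_ext_prod_emp:
  assumes "(\<lambda>(y, a). p y a) \<in> borel_measurable (Ek M (k - 1) \<Otimes>\<^sub>M M)" and "g \<in> borel_measurable (Ek M k)"
  shows "(\<integral>\<^sup>+x. g x \<partial>ext_prod M k emp p) = (\<Sum>i<N. \<integral>\<^sup>+a. ennreal (p (xs i) a) * g ((xs i)(k := a)) \<partial>M) / of_nat N"
proof -
  have "(\<integral>\<^sup>+x. g x \<partial>ext_prod M k emp p) = (\<integral>\<^sup>+y. \<integral>\<^sup>+a. ennreal (p y a) * g (y(k := a)) \<partial>M \<partial>emp)"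
    by (rule nn_integral_ext_prod[OF _ assms]) simp
  also have "\<dots> = (\<Sum>i<N. \<integral>\<^sup>+a. ennreal (p (xs i) a) * g ((xs i)(k := a)) \<partial>M) / of_nat N"
    by (rule nn_integral_emp_measure[OF samples_pos sample_in_space]) (use assms in measurable)
  finally show ?thesis .
qed

lemma prob_space_proposal: "prob_space (ext_prod M k emp (q k))"
proof
  have "emeasure (ext_prod M k emp (q k)) (space (ext_prod M k emp (q k))) = (\<integral>\<^sup>+x. 1 \<partial>ext_prod M k emp (q k))"
    by simp
  also have "\<dots> = (\<Sum>i<N. 1) / of_nat N"
    using q_prob[OF sample_in_space] by (subst nn_integral_ext_prod_emp[OF measurable_proposal]) simp_all
  also have "\<dots> = 1" using samples_pos by (simp add: ennreal_of_nat_eq_real_of_nat)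
  finally show "emeasure (ext_prod M k emp (q k)) (space (ext_prod M k emp (q k))) = 1" .
qed

definition "normalizer = (\<integral>y. hmm_pred M p0 tr lik k y \<partial>emp)"
definition "target_const = hmm_Z M p0 tr lik (k - 1) / (hmm_Z M p0 tr lik k * normalizer)"

lemma normalizer_pos: "0 < normalizer"
  unfolding normalizer_def by (rule pred_integral_pos)

lemma normalizer_eq: "normalizer = (\<Sum>i<N. hmm_pred M p0 tr lik k (xs i)) / N"
  unfolding normalizer_def by (rule integral_emp_measure[OF samples_pos _ measurable_hmm_pred]) (rule sample_in_space)

lemma target_const_pos: "0 < target_const"
  unfolding target_const_def using Z_pos normalizer_pos by simp

lemma hmm_cond_pred_eq_proposal_weight:
  assumes i: "i < N"
  shows "AE a in M. ennreal (hmm_cond M p0 tr lik k (xs i) a) * ennreal (hmm_pred M p0 tr lik k (xs i) / normalizer)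
                      = ennreal (q k (xs i) a) * (ennreal target_const * w ((xs i)(k := a)))"
  using hmm_cond_mult_pred[OF sample_gamma_pos[OF i] integrable_hmm_incr[OF sample_in_space[OF i] sample_gamma_pos[OF i]]]
    AE_space
proof eventually_elim
  case (elim a)
  have "ennreal (q k (xs i) a) * (ennreal target_const * w ((xs i)(k := a)))
      = ennreal target_const * (ennreal (q k (xs i) a) * w ((xs i)(k := a)))"
    by (rule mult.left_commute)
  also have "\<dots> = ennreal target_const * ennreal (incr (xs i) a)"
    using proposal_mult_weight[OF sample_in_space[OF i] sample_gamma_pos[OF i] elim(2)] by simp
  also have "\<dots> = ennreal (hmm_cond M p0 tr lik k (xs i) a * hmm_pred M p0 tr lik k (xs i) / normalizer)"
    using elim(1) target_const_pos by (simp add: ennreal_mult[symmetric] hmm_incr_nonneg target_const_def field_simps)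
  finally show ?case
    using hmm_cond_nonneg hmm_pred_nonneg normalizer_pos
    by (simp add: ennreal_mult[symmetric] normalizer_def divide_nonneg_pos)
qed

lemma target_eq_density_proposal:
  "density (ext_prod M k emp (hmm_cond M p0 tr lik k))
      (\<lambda>x. ennreal (hmm_pred M p0 tr lik k (restrict x {..<k}) / normalizer))
    = density (ext_prod M k emp (q k)) (\<lambda>x. ennreal target_const * w x)"
  (is "density ?\<mu> ?f = density ?\<nu> ?g")
proof (rule measure_eqI)
  show "sets (density ?\<mu> ?f) = sets (density ?\<nu> ?g)" by simp
  fix A assume "A \<in> sets (density ?\<mu> ?f)"
  then have A[measurable]: "A \<in> sets (Ek M k)" by simp
  have [measurable]: "?f \<in> borel_measurable (Ek M k)"
    using measurable_compose[OF measurable_truncate measurable_hmm_pred] by measurable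
  have "emeasure (density ?\<mu> ?f) A = (\<integral>\<^sup>+x. ?f x * indicator A x \<partial>?\<mu>)"
    by (rule emeasure_density) simp_all
  also have "\<dots> = (\<Sum>i<N. \<integral>\<^sup>+a. ennreal (hmm_cond M p0 tr lik k (xs i) a)
            * (ennreal (hmm_pred M p0 tr lik k (xs i) / normalizer) * indicator A ((xs i)(k := a))) \<partial>M) / of_nat N"
    using restrict_prev[OF sample_in_space]
    by (subst nn_integral_ext_prod_emp[OF measurable_hmm_cond]) simp_all
  also have "\<dots> = (\<Sum>i<N. \<integral>\<^sup>+a. ennreal (q k (xs i) a)
            * (ennreal target_const * w ((xs i)(k := a)) * indicator A ((xs i)(k := a))) \<partial>M) / of_nat N"
  proof (intro arg_cong[where f = "\<lambda>s. s / of_nat N"] sum.cong refl nn_integral_cong_AE)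
    fix i assume "i \<in> {..<N}"
    then have "i < N" by simp
    from hmm_cond_pred_eq_proposal_weight[OF this] show "AE a in M. ennreal (hmm_cond M p0 tr lik k (xs i) a)
            * (ennreal (hmm_pred M p0 tr lik k (xs i) / normalizer) * indicator A ((xs i)(k := a)))
          = ennreal (q k (xs i) a) * (ennreal target_const * w ((xs i)(k := a)) * indicator A ((xs i)(k := a)))"
      by eventually_elim (simp add: mult.assoc[symmetric])
  qed
  also have "\<dots> = (\<integral>\<^sup>+x. ?g x * indicator A x \<partial>?\<nu>)"
    by (subst nn_integral_ext_prod_emp[OF measurable_proposal]) simp_all
  also have "\<dots> = emeasure (density ?\<nu> ?g) A"
    by (rule emeasure_density[symmetric]) simp_all
  finally show "emeasure (density ?\<mu> ?f) A = emeasure (density ?\<nu> ?g) A" .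
qed

lemma nn_integral_proposal_weight:
  assumes i: "i < N"
  shows "(\<integral>\<^sup>+a. ennreal (q k (xs i) a) * (ennreal target_const * w ((xs i)(k := a))) \<partial>M)
           = ennreal (hmm_pred M p0 tr lik k (xs i) / normalizer)"
proof -
  note y = sample_in_space[OF i] and pos = sample_gamma_pos[OF i]
  have "(\<integral>\<^sup>+a. ennreal (q k (xs i) a) * (ennreal target_const * w ((xs i)(k := a))) \<partial>M)
      = (\<integral>\<^sup>+a. ennreal target_const * ennreal (incr (xs i) a) \<partial>M)"
    by (intro nn_integral_cong) (simp add: mult.left_commute[of "ennreal (q k (xs i) _)"] proposal_mult_weight[OF y pos])
  also have "\<dots> = ennreal target_const * ennreal (\<integral>a. incr (xs i) a \<partial>M)"
    using integrable_hmm_incr[OF y pos]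
    by (simp add: nn_integral_cmult nn_integral_eq_integral hmm_incr_nonneg)
  also have "\<dots> = ennreal (target_const * (\<integral>a. incr (xs i) a \<partial>M))"
    using target_const_pos by (simp add: ennreal_mult')
  also have "target_const * (\<integral>a. incr (xs i) a \<partial>M) = hmm_pred M p0 tr lik k (xs i) / normalizer"
    unfolding hmm_pred_eq[OF pos] target_const_def using Z_pos normalizer_pos by (simp add: field_simps)
  finally show ?thesis .
qed

lemma prob_space_target: "prob_space (density (ext_prod M k emp (q k)) (\<lambda>x. ennreal target_const * w x))"
proof
  let ?\<nu> = "ext_prod M k emp (q k)"
  have "emeasure (density ?\<nu> (\<lambda>x. ennreal target_const * w x)) (space ?\<nu>)
      = (\<integral>\<^sup>+x. ennreal target_const * w x \<partial>?\<nu>)"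
    by (subst emeasure_density) (auto intro!: nn_integral_cong)
  also have "\<dots> = (\<Sum>i<N. ennreal (hmm_pred M p0 tr lik k (xs i) / normalizer)) / of_nat N"
    using nn_integral_proposal_weight by (subst nn_integral_ext_prod_emp[OF measurable_proposal]) simp_all
  also have "\<dots> = ennreal ((\<Sum>i<N. hmm_pred M p0 tr lik k (xs i) / normalizer) / N)"
    using samples_pos normalizer_pos hmm_pred_nonneg
    by (simp add: divide_ennreal ennreal_of_nat_eq_real_of_nat sum_nonneg)
  also have "(\<Sum>i<N. hmm_pred M p0 tr lik k (xs i) / normalizer) / N
      = ((\<Sum>i<N. hmm_pred M p0 tr lik k (xs i)) / N) / normalizer"
    by (simp add: sum_divide_distrib[symmetric] mult.commute)
  also have "\<dots> = normalizer / normalizer"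
    by (simp only: normalizer_eq)
  also have "normalizer / normalizer = 1"
    using normalizer_pos by simp
  finally show "emeasure (density ?\<nu> (\<lambda>x. ennreal target_const * w x))
      (space (density ?\<nu> (\<lambda>x. ennreal target_const * w x))) = 1" by simp
qed

end

theorem proposition1:
  fixes M :: "'a measure"
    and p0 :: "'a \<Rightarrow> real" and tr :: "'a \<Rightarrow> 'a \<Rightarrow> real" and lik :: "nat \<Rightarrow> 'a \<Rightarrow> real"
    and q0 :: "'a \<Rightarrow> real" and q :: "nat \<Rightarrow> (nat \<Rightarrow> 'a) \<Rightarrow> 'a \<Rightarrow> real"
    and k N :: nat and xs :: "nat \<Rightarrow> (nat \<Rightarrow> 'a)"
  assumes sf: "sigma_finite_measure M"
    and p0: "p0 \<in> borel_measurable M" "\<forall>a. p0 a \<ge> 0" "(\<integral>\<^sup>+a. ennreal (p0 a) \<partial>M) = 1"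
    and tr: "(\<lambda>(u, v). tr u v) \<in> borel_measurable (M \<Otimes>\<^sub>M M)" "\<forall>u v. tr u v \<ge> 0"
            "\<forall>u\<in>space M. (\<integral>\<^sup>+v. ennreal (tr u v) \<partial>M) = 1"
    and lik: "\<forall>l. lik l \<in> borel_measurable M" "\<forall>l a. lik l a \<ge> 0"
    and Z: "\<forall>j. integrable (Ek M j) (hmm_gamma p0 tr lik j) \<and> hmm_Z M p0 tr lik j > 0"
    and q0: "q0 \<in> borel_measurable M" "\<forall>a. q0 a \<ge> 0" "(\<integral>\<^sup>+a. ennreal (q0 a) \<partial>M) = 1"
    and q: "\<forall>j>0. (\<lambda>x. q j (restrict x {..<j}) (x j)) \<in> borel_measurable (Ek M j)"
           "\<forall>j y a. q j y a \<ge> 0"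
           "\<forall>j>0. \<forall>y\<in>space (Ek M (j - 1)). (\<integral>\<^sup>+a. ennreal (q j y a) \<partial>M) = 1"
    and bounded: "\<forall>j. \<exists>B::real. \<forall>x\<in>hmm_supp M p0 tr lik j. smc_weight p0 tr lik q0 q j x \<le> ennreal B"
    and k: "k > 0"
    and N: "N > 0"
    and samples: "\<forall>i<N. xs i \<in> hmm_supp M p0 tr lik (k - 1)"
    and norm_pos: "(\<integral>y. hmm_pred M p0 tr lik k y \<partial>emp_measure (Ek M (k - 1)) N xs) > 0"
  shows
    "let S = Ek M k;
         emp = emp_measure (Ek M (k - 1)) N xs;
         K = imh_kernel S (ext_prod M k emp (q k)) (smc_weight p0 tr lik q0 q k);
         target = density (ext_prod M k emp (hmm_cond M p0 tr lik k))
                    (\<lambda>x. ennreal (hmm_pred M p0 tr lik k (restrict x {..<k})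
                                  / (\<integral>y. hmm_pred M p0 tr lik k y \<partial>emp)))
     in prob_space target \<and> sets target = sets S
        \<and> K \<in> S \<rightarrow>\<^sub>M prob_algebra S
        \<and> bind target K = target
        \<and> uniformly_ergodic S (hmm_supp M p0 tr lik k) K target"
proof -
  obtain B0 where B0: "\<forall>x\<in>hmm_supp M p0 tr lik k. smc_weight p0 tr lik q0 q k x \<le> ennreal B0"
    using bounded by blast
  have B: "\<forall>x\<in>hmm_supp M p0 tr lik k. smc_weight p0 tr lik q0 q k x \<le> ennreal (max B0 1)"
  proof
    fix x assume "x \<in> hmm_supp M p0 tr lik k"
    then have "smc_weight p0 tr lik q0 q k x \<le> ennreal B0" using B0 by blast
    also have "\<dots> \<le> ennreal (max B0 1)" by (rule ennreal_leI) simp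
    finally show "smc_weight p0 tr lik q0 q k x \<le> ennreal (max B0 1)" .
  qed
  interpret smc_step M k p0 tr lik q0 q N xs "max B0 1"
    by (intro smc_step.intro hmm_step.intro path_space.intro hmm_step_axioms.intro smc_step_axioms.intro)
      (use sf p0 tr lik Z q B k N samples norm_pos in simp_all)
  interpret indep_mh "Ek M k" "ext_prod M k emp (q k)" w
    by (rule indep_mh.intro[OF prob_space_proposal _ measurable_smc_weight]) simp
  interpret doeblin_kernel "Ek M k" "imh_kernel (Ek M k) (ext_prod M k emp (q k)) w"
      "density (ext_prod M k emp (q k)) (\<lambda>x. ennreal target_const * w x)" "1 / (target_const * max B0 1)"
    using smc_weight_bounded by (rule doeblin_kernel_imh_kernel[OF _ _ target_const_pos prob_space_target]) simp_all
  have "hmm_supp M p0 tr lik k \<subseteq> space (Ek M k)" by (auto simp: hmm_supp_def)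
  note ergodic = uniformly_ergodic[OF this hmm_supp_nonempty[OF Z_pos(2)]]
  show ?thesis
    unfolding Let_def normalizer_def[symmetric] target_eq_density_proposal
    by (intro conjI prob_space_stationary sets_stationary kernel stationary ergodic)
qed

end
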